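(* Fix $\nu>0$ and $\mu_k\in\mathbb{R}$, and consider the sub-problem of minimizing $\mathcal L_{\nu,\mu_k}(x)=f(x)+\mu_kh(x)+\frac{1}{2\nu}h(x)^2$ over $x\in\mathbb{R}^n$. Let $\bar x$ be a stationary point of $\mathcal L_{\nu,\mu_k}$, and set $\bar\tau=h(\bar x)/\nu$, $\bar\sigma_f=\nabla V_f(\Lambda_f(\bar x))$, $\bar\sigma_h=\nabla V_h(\Lambda_h(\bar x))$. If $G(\bar\tau,\bar\sigma_f,\bar\sigma_h)$ is nonsingular, then $(\bar\tau,\bar\sigma_f,\bar\sigma_h)$ is a stationary point of $P^d_{\nu,\mu_k}$ and $$\mathcal L_{\nu,\mu_k}(\bar x)=P^d_{\nu,\mu_k}(\bar\tau,\bar\sigma_f,\bar\sigma_h).$$ Furthermore, if $V_f$ and $V_h$ are convex, $\mu_k+\bar\tau>0$ and $G(\bar\tau,\bar\sigma_f,\bar\sigma_h)\succ0$, then $\bar x$ is a global minimizer of $\mathcal L_{\nu,\mu_k}$ on $\mathbb{R}^n$.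
   Context: Setting: $f(x)=V_f(\Lambda_f(x))+\tfrac12x^TAx-c^Tx$ ($A$ symmetric, $c\in\mathbb{R}^n$) and a single constraint function $h(x)=V_h(\Lambda_h(x))\in\mathbb{R}$, where $\Lambda_f:\mathbb{R}^n\to\mathbb{R}^{k_f}$, $\Lambda_h:\mathbb{R}^n\to\mathbb{R}^{l}$ are quadratic maps (components polynomials of degree at most 2), and $V_f,V_h$ are "canonical functions": each $V$ is differentiable on an open set $E$ containing the image of its $\Lambda$, $\nabla V:E\to E^*$ is a bijection onto an open set $E^*$, and the Legendre conjugate $V^*(\sigma)=\sigma^T\xi-V(\xi)$, $\xi=(\nabla V)^{-1}(\sigma)$, is differentiable on $E^*$ with $\nabla V^*=(\nabla V)^{-1}$. For fixed $\nu>0,\mu_k$, define for $\tau\in\mathbb{R}$, $\sigma_f\in E_f^*$, $\sigma_h\in E_h^*$: $$\Xi_1^{\nu,\mu_k}(x,\tau,\sigma_f,\sigma_h)=\Lambda_f(x)^T\sigma_f-V_f^*(\sigma_f)+(\mu_k+\tau)\big[\Lambda_h(x)^T\sigma_h-V_h^*(\sigma_h)\big]-\tfrac{\nu}{2}\tau^2+\tfrac12x^TAx-c^Tx,$$ which is quadratic in $x$ with $x$-independent Hessian $G(\tau,\sigma_f,\sigma_h)=\nabla_x^2\Xi_1^{\nu,\mu_k}$. The dual function $P^d_{\nu,\mu_k}(\tau,\sigma_f,\sigma_h)$ is defined, on the open set where $G(\tau,\sigma_f,\sigma_h)$ is nonsingular, as the value of $\Xi_1^{\nu,\mu_k}(\cdot,\tau,\sigma_f,\sigma_h)$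 at its unique stationary point in $x$; equivalently $P^d_{\nu,\mu_k}=U^\Lambda(\mu_k+\tau,\sigma_f,\sigma_h)-V_f^*(\sigma_f)-(\mu_k+\tau)V_h^*(\sigma_h)-\frac{\nu}{2}\tau^2$, where $U^\Lambda(\mu,\sigma_f,\sigma_h)$ is the stationary value in $x$ of $\Lambda_f(x)^T\sigma_f+\mu\Lambda_h(x)^T\sigma_h+\tfrac12x^TAx-c^Tx$. *)

theory Defs
  imports "HOL-Analysis.Analysis"
begin

text \<open>A quadratic map R^n -> R^k: every component is a polynomial of degree at most 2,
  written as (1/2) x'Q_i x + b_i'x + d_i with Q_i symmetric (every such polynomial
  has a unique representation of this form).\<close>
definition quad_map ::
  "('k::finite \<Rightarrow> real^'n^'n) \<Rightarrow> ('k \<Rightarrow> real^'n) \<Rightarrow> ('k \<Rightarrow> real) \<Rightarrow> real^'n \<Rightarrow> real^'k" where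
  "quad_map Q b d x = (\<chi> i. (1/2) * (x \<bullet> (Q i *v x)) + b i \<bullet> x + d i)"

text \<open>Hessian of x \<mapsto> sigma' (quad_map Q b d x), i.e. sum_i sigma_i Q_i.\<close>
definition hess_comb :: "('k::finite \<Rightarrow> real^'n^'n) \<Rightarrow> real^'k \<Rightarrow> real^'n^'n" where
  "hess_comb Q \<sigma> = (\<Sum>i\<in>UNIV. (\<sigma> $ i) *\<^sub>R Q i)"

definition legendre_conj ::
  "(real^'k \<Rightarrow> real) \<Rightarrow> (real^'k \<Rightarrow> real^'k) \<Rightarrow> (real^'k) set \<Rightarrow> real^'k \<Rightarrow> real" where
  "legendre_conj V gV E \<sigma> = (let \<xi> = inv_into E gV \<sigma> in \<sigma> \<bullet> \<xi> - V \<xi>)"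

definition canonical ::
  "(real^'k \<Rightarrow> real) \<Rightarrow> (real^'k \<Rightarrow> real^'k) \<Rightarrow> (real^'k) set \<Rightarrow> (real^'k) set \<Rightarrow> bool" where
  "canonical V gV E Es \<longleftrightarrow> open E \<and> open Es \<and>
     (\<forall>\<xi>\<in>E. GDERIV V \<xi> :> gV \<xi>) \<and> bij_betw gV E Es \<and>
     (\<forall>\<sigma>\<in>Es. GDERIV (legendre_conj V gV E) \<sigma> :> inv_into E gV \<sigma>)"

definition pos_def_mat :: "real^'n^'n \<Rightarrow> bool" where
  "pos_def_mat M \<longleftrightarrow> (\<forall>x. x \<noteq> 0 \<longrightarrow> x \<bullet> (M *v x) > 0)"

end

(*
  At the dual point p = (tau_bar, sigma_f_bar, sigma_h_bar), Fenchel's equality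
  V(xi) + V*(grad V xi) = xi . grad V xi makes Xi(x, p) a quadratic function of x with Hessian G
  whose gradient at xbar equals the gradient of L; so xbar is its unique stationary point when G
  is invertible, and P^d(p) = Xi(xbar, p) = L(xbar).  Stationarity of P^d is an envelope
  argument: P^d(q) - Xi(xbar, q) = -(1/2) (xbar - x_q) . G(q) (xbar - x_q) is quadratically small
  in q - p because G(q) stays uniformly invertible near p, while the q-derivative of Xi(xbar, q)
  vanishes at p by Fenchel's equality and nu tau_bar = h(xbar).  For the global minimum, the
  Fenchel-Young inequality, mu + tau_bar > 0 and completing the square in tau give
  Xi(x, p) <= L(x), and G > 0 makes xbar the minimiser of the quadratic Xi(., p).
*)

theory Submission
  imports Defs
begin

subsection \<open>Quadratic functions\<close>

definition quadratic_fun :: "real^'n^'n \<Rightarrow> real^'n \<Rightarrow> real \<Rightarrow> real^'n \<Rightarrow> real" where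
  "quadratic_fun M \<beta> \<gamma> y = (1/2) * (y \<bullet> (M *v y)) + \<beta> \<bullet> y + \<gamma>"

lemma inner_matrix_vector_commute:
  fixes M :: "real^'n^'n"
  assumes "transpose M = M"
  shows "x \<bullet> (M *v y) = y \<bullet> (M *v x)"
  by (metis assms dot_lmul_matrix inner_commute vector_transpose_matrix)

lemma gderiv_quadratic_fun:
  assumes "transpose M = M"
  shows "GDERIV (quadratic_fun M \<beta> \<gamma>) x :> M *v x + \<beta>"
proof -
  have "(quadratic_fun M \<beta> \<gamma> has_derivative
      (\<lambda>h. (x \<bullet> (M *v h) + h \<bullet> (M *v x)) / 2 + \<beta> \<bullet> h)) (at x)"
    unfolding quadratic_fun_def[abs_def]
    by (rule derivative_eq_intros bounded_linear.has_derivative[OF matrix_vector_mul_bounded_linear]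
        | simp)+
  then show ?thesis
    unfolding gderiv_def
    by (rule has_derivative_eq_rhs)
      (simp add: inner_matrix_vector_commute[OF assms, of x] inner_add_right inner_commute)
qed

lemma gderiv_zero_iff:
  assumes "GDERIV f x :> a"
  shows "(GDERIV f x :> 0) \<longleftrightarrow> a = 0"
proof
  assume "GDERIV f x :> 0"
  then have "(\<lambda>h. h \<bullet> a) = (\<lambda>h. h \<bullet> 0)"
    using has_derivative_unique assms unfolding gderiv_def by blast
  then show "a = 0"
    by (metis inner_eq_zero_iff inner_zero_right)
qed (use assms in simp)

lemma quadratic_fun_stationary_iff:
  assumes "transpose M = M"
  shows "(GDERIV (quadratic_fun M \<beta> \<gamma>) x :> 0) \<longleftrightarrow> M *v x + \<beta> = 0"
  using gderiv_zero_iff[OF gderiv_quadratic_fun[OF assms]] .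

lemma quadratic_fun_expand:
  assumes "transpose M = M"
  shows "quadratic_fun M \<beta> \<gamma> y =
    quadratic_fun M \<beta> \<gamma> x + (M *v x + \<beta>) \<bullet> (y - x) + (1/2) * ((y - x) \<bullet> (M *v (y - x)))"
  using inner_matrix_vector_commute[OF assms, of x y]
  by (simp add: quadratic_fun_def algebra_simps inner_commute)

lemma quadratic_fun_gap_at_stationary:
  assumes "transpose M = M" and "M *v x + \<beta> = 0"
  shows "quadratic_fun M \<beta> \<gamma> y - quadratic_fun M \<beta> \<gamma> x = (1/2) * ((y - x) \<bullet> (M *v y + \<beta>))"
proof -
  have "M *v (y - x) = M *v y + \<beta>"
    using assms(2) by (simp add: algebra_simps)
  then show ?thesis
    using quadratic_fun_expand[OF assms(1), of \<beta> \<gamma> y x] assms(2) by simp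
qed

lemma quadratic_fun_minimum:
  assumes "transpose M = M" and "pos_def_mat M" and "M *v x + \<beta> = 0"
  shows "quadratic_fun M \<beta> \<gamma> x \<le> quadratic_fun M \<beta> \<gamma> y"
proof -
  have "0 \<le> (y - x) \<bullet> (M *v (y - x))"
    using assms(2) unfolding pos_def_mat_def by (cases "y = x") (auto intro: less_imp_le)
  then show ?thesis
    using quadratic_fun_expand[OF assms(1), of \<beta> \<gamma> y x] assms(3) by simp
qed

lemma the_stationary_point_quadratic_fun:
  assumes "transpose M = M" and "invertible M" and "M *v x + \<beta> = 0"
  shows "(THE y. GDERIV (quadratic_fun M \<beta> \<gamma>) y :> 0) = x"
proof (rule the_equality)
  show "GDERIV (quadratic_fun M \<beta> \<gamma>) x :> 0"
    using assms by (simp add: quadratic_fun_stationary_iff)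
next
  fix y assume "GDERIV (quadratic_fun M \<beta> \<gamma>) y :> 0"
  then have "M *v y + \<beta> = M *v x + \<beta>"
    using assms by (simp add: quadratic_fun_stationary_iff)
  then have "M *v (y - x) = 0"
    by (simp add: matrix_vector_mult_diff_distrib)
  moreover have "\<forall>v. M *v v = 0 \<longrightarrow> v = 0"
    using assms(2) by (simp add: invertible_left_inverse matrix_left_invertible_ker)
  ultimately have "y - x = 0" by blast
  then show "y = x" by simp
qed

definition stationary_value :: "('a::real_inner \<Rightarrow> real) \<Rightarrow> real" where
  "stationary_value f = f (THE x. GDERIV f x :> 0)"

lemma stationary_value_quadratic_fun:
  assumes "transpose M = M" and "invertible M" and "M *v x + \<beta> = 0"
  shows "stationary_value (quadratic_fun M \<beta> \<gamma>) = quadratic_fun M \<beta> \<gamma> x"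
  using the_stationary_point_quadratic_fun[OF assms] by (simp add: stationary_value_def)

subsection \<open>Local estimates\<close>

lemma differentiable_imp_eventually_lipschitz_at:
  assumes "f differentiable (at a)"
  shows "\<exists>K. \<forall>\<^sub>F x in at a. norm (f x - f a) \<le> K * norm (x - a)"
proof -
  obtain D where "(f has_derivative D) (at a)"
    using assms by (auto simp: differentiable_def)
  then have lin: "bounded_linear D"
    and lim: "((\<lambda>x. norm (f x - f a - D (x - a)) / norm (x - a)) \<longlongrightarrow> 0) (at a)"
    unfolding has_derivative_iff_norm by auto
  obtain KD where KD: "\<And>v. norm (D v) \<le> norm v * KD"
    using bounded_linear.bounded[OF lin] by blast
  have "\<forall>\<^sub>F x in at a. norm (f x - f a - D (x - a)) / norm (x - a) < 1"
    using order_tendstoD(2)[OF lim] by simp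
  then have "\<forall>\<^sub>F x in at a. norm (f x - f a) \<le> (1 + KD) * norm (x - a)"
  proof (rule eventually_mono)
    fix x assume x: "norm (f x - f a - D (x - a)) / norm (x - a) < 1"
    show "norm (f x - f a) \<le> (1 + KD) * norm (x - a)"
    proof (cases "x = a")
      case False
      then have "norm (f x - f a - D (x - a)) \<le> norm (x - a)"
        using x by (simp add: divide_less_eq)
      moreover have "norm (f x - f a) \<le> norm (f x - f a - D (x - a)) + norm (D (x - a))"
        by (metis diff_add_cancel norm_triangle_ineq)
      ultimately show ?thesis
        using KD[of "x - a"] by (simp add: algebra_simps)
    qed simp
  qed
  then show ?thesis by blast
qed

lemma has_derivative_zero_if_quadratic_bound:
  fixes E :: "'a::real_normed_vector \<Rightarrow> 'b::real_normed_vector"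
  assumes bound: "\<forall>\<^sub>F x in at a. norm (E x) \<le> K * (norm (x - a))\<^sup>2" and "E a = 0"
  shows "(E has_derivative (\<lambda>_. 0)) (at a)"
  unfolding has_derivative_iff_norm
proof (intro conjI)
  show "bounded_linear (\<lambda>_::'a. 0::'b)" by simp
  have "((\<lambda>x. K * norm (x - a)) \<longlongrightarrow> K * norm (a - a)) (at a)"
    by (intro tendsto_intros)
  then have lim: "((\<lambda>x. K * norm (x - a)) \<longlongrightarrow> 0) (at a)" by simp
  show "((\<lambda>x. norm (E x - E a - 0) / norm (x - a)) \<longlongrightarrow> 0) (at a)"
  proof (rule tendsto_sandwich[OF _ _ tendsto_const lim])
    show "\<forall>\<^sub>F x in at a. norm (E x - E a - 0) / norm (x - a) \<le> K * norm (x - a)"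
      using bound
    proof (rule eventually_mono)
      fix x assume "norm (E x) \<le> K * (norm (x - a))\<^sup>2"
      then show "norm (E x - E a - 0) / norm (x - a) \<le> K * norm (x - a)"
        using \<open>E a = 0\<close> by (cases "x = a") (simp_all add: divide_le_eq power2_eq_square mult.assoc)
    qed
  qed simp
qed

lemma norm_matrix_vector_mult_le:
  fixes M :: "real^'n^'m"
  shows "norm (M *v v) \<le> (\<Sum>i\<in>UNIV. \<Sum>j\<in>UNIV. \<bar>M $ i $ j\<bar>) * norm v"
proof -
  have "norm (M *v v) \<le> onorm ((*v) M) * norm v" by (rule onorm) simp
  also have "\<dots> \<le> (\<Sum>i\<in>UNIV. \<Sum>j\<in>UNIV. \<bar>M $ i $ j\<bar>) * norm v"
    by (rule mult_right_mono[OF onorm_le_matrix_component_sum]) simp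
  finally show ?thesis .
qed

lemma invertible_matrix_eventually_bounded_below:
  fixes M :: "'a \<Rightarrow> real^'n^'n"
  assumes lim: "(M \<longlongrightarrow> M0) F" and inv: "invertible M0"
  shows "\<exists>K>0. \<forall>\<^sub>F p in F. \<forall>v. norm v \<le> K * norm (M p *v v)"
proof -
  obtain B where B: "B ** M0 = mat 1"
    using inv by (auto simp: invertible_left_inverse)
  obtain KB where "KB > 0" and KB: "\<And>w. norm (B *v w) \<le> norm w * KB"
    using bounded_linear.pos_bounded[OF matrix_vector_mul_bounded_linear[of B]] by blast
  have M0_below: "norm v \<le> KB * norm (M0 *v v)" for v
    using KB[of "M0 *v v"] by (simp add: matrix_vector_mul_assoc B mult.commute)
  define S where "S p = (\<Sum>i\<in>UNIV. \<Sum>j\<in>UNIV. \<bar>(M p - M0) $ i $ j\<bar>)" for p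
  have "(S \<longlongrightarrow> (\<Sum>i\<in>UNIV. \<Sum>j\<in>UNIV. \<bar>(M0 - M0) $ i $ j\<bar>)) F"
    unfolding S_def by (intro tendsto_intros lim)
  then have "(S \<longlongrightarrow> 0) F" by simp
  then have "\<forall>\<^sub>F p in F. S p < 1 / (2 * KB)"
    by (rule order_tendstoD(2)) (use \<open>KB > 0\<close> in simp)
  then have "\<forall>\<^sub>F p in F. \<forall>v. norm v \<le> 2 * KB * norm (M p *v v)"
  proof (rule eventually_mono, intro allI)
    fix p v assume small: "S p < 1 / (2 * KB)"
    have "norm ((M p - M0) *v v) \<le> S p * norm v"
      unfolding S_def by (rule norm_matrix_vector_mult_le)
    also have "\<dots> \<le> (1 / (2 * KB)) * norm v"
      using small by (intro mult_right_mono) simp_all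
    finally have "norm ((M p - M0) *v v) \<le> norm v / (2 * KB)" by simp
    moreover have "norm (M0 *v v) \<le> norm (M p *v v) + norm ((M p - M0) *v v)"
      using norm_triangle_ineq4[of "M p *v v" "(M p - M0) *v v"]
      by (simp add: matrix_vector_mult_diff_rdistrib)
    ultimately have "norm (M0 *v v) \<le> norm (M p *v v) + norm v / (2 * KB)"
      by linarith
    then have "KB * norm (M0 *v v) \<le> KB * (norm (M p *v v) + norm v / (2 * KB))"
      using \<open>KB > 0\<close> by (intro mult_left_mono) simp_all
    then have "norm v \<le> KB * (norm (M p *v v) + norm v / (2 * KB))"
      using M0_below[of v] by linarith
    then show "norm v \<le> 2 * KB * norm (M p *v v)"
      using \<open>KB > 0\<close> by (simp add: algebra_simps)
  qed
  then show ?thesis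
    using \<open>KB > 0\<close> by (intro exI[of _ "2 * KB"]) simp
qed

lemma stationary_value_quadratic_fun_gap:
  fixes M :: "real^'n^'n"
  assumes sym: "transpose M = M" and below: "\<forall>v. norm v \<le> K * norm (M *v v)"
  shows "\<bar>stationary_value (quadratic_fun M \<beta> \<gamma>) - quadratic_fun M \<beta> \<gamma> x0\<bar>
    \<le> K / 2 * (norm (M *v x0 + \<beta>))\<^sup>2"
proof -
  let ?r = "M *v x0 + \<beta>"
  have "\<forall>v. M *v v = 0 \<longrightarrow> v = 0"
    using below by (metis norm_eq_zero mult_zero_right norm_le_zero_iff)
  then have inv: "invertible M"
    by (simp add: invertible_left_inverse matrix_left_invertible_ker)
  then obtain B where B: "M ** B = mat 1"
    by (auto simp: invertible_right_inverse)
  define x where "x = B *v (- \<beta>)"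
  have x: "M *v x + \<beta> = 0"
    by (simp add: x_def matrix_vector_mul_assoc B)
  have "M *v (x0 - x) = ?r"
    using x by (simp add: algebra_simps)
  then have dist: "norm (x0 - x) \<le> K * norm ?r"
    using below by metis
  have "stationary_value (quadratic_fun M \<beta> \<gamma>) - quadratic_fun M \<beta> \<gamma> x0
      = - ((1/2) * ((x0 - x) \<bullet> ?r))"
    using quadratic_fun_gap_at_stationary[OF sym x, of \<gamma> x0]
      stationary_value_quadratic_fun[OF sym inv x]
    by simp
  then have "\<bar>stationary_value (quadratic_fun M \<beta> \<gamma>) - quadratic_fun M \<beta> \<gamma> x0\<bar>
      \<le> (1/2) * (norm (x0 - x) * norm ?r)"
    using Cauchy_Schwarz_ineq2[of "x0 - x" ?r] by (simp add: abs_mult)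
  also have "\<dots> \<le> (1/2) * (K * norm ?r * norm ?r)"
    using dist by (intro mult_left_mono mult_right_mono) auto
  finally show ?thesis
    by (simp add: power2_eq_square)
qed

lemma stationary_value_quadratic_family_has_derivative:
  fixes M :: "'a::real_normed_vector \<Rightarrow> real^'n^'n"
  assumes sym: "\<And>p. transpose (M p) = M p"
    and cont: "isCont M p0" and inv: "invertible (M p0)"
    and grad_diff: "(\<lambda>p. M p *v x0 + \<beta> p) differentiable (at p0)"
    and stat: "M p0 *v x0 + \<beta> p0 = 0"
    and val: "((\<lambda>p. quadratic_fun (M p) (\<beta> p) (\<gamma> p) x0) has_derivative D) (at p0)"
  shows "((\<lambda>p. stationary_value (quadratic_fun (M p) (\<beta> p) (\<gamma> p))) has_derivative D) (at p0)"
proof -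
  define q where "q p = quadratic_fun (M p) (\<beta> p) (\<gamma> p)" for p
  define gap where "gap p = stationary_value (q p) - q p x0" for p
  obtain K where "K > 0" and below: "\<forall>\<^sub>F p in at p0. \<forall>v. norm v \<le> K * norm (M p *v v)"
    using invertible_matrix_eventually_bounded_below[OF cont[unfolded isCont_def] inv] by blast
  obtain Kr where lip: "\<forall>\<^sub>F p in at p0. norm (M p *v x0 + \<beta> p) \<le> Kr * norm (p - p0)"
    using differentiable_imp_eventually_lipschitz_at[OF grad_diff] stat by auto
  have "\<forall>\<^sub>F p in at p0. norm (gap p) \<le> (K * Kr\<^sup>2 / 2) * (norm (p - p0))\<^sup>2"
    using below lip
  proof eventually_elim
    case (elim p)
    have "norm (gap p) \<le> K / 2 * (norm (M p *v x0 + \<beta> p))\<^sup>2"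
      using stationary_value_quadratic_fun_gap[OF sym elim(1)] by (simp add: gap_def q_def)
    also have "\<dots> \<le> K / 2 * (Kr * norm (p - p0))\<^sup>2"
      using elim(2) \<open>K > 0\<close> by (intro mult_left_mono power_mono) auto
    finally show ?case
      by (simp add: power_mult_distrib)
  qed
  moreover have "gap p0 = 0"
    using stationary_value_quadratic_fun[OF sym inv stat] by (simp add: gap_def q_def)
  ultimately have "(gap has_derivative (\<lambda>_. 0)) (at p0)"
    by (rule has_derivative_zero_if_quadratic_bound)
  from has_derivative_add[OF val this] show ?thesis
    by (simp add: gap_def q_def)
qed

subsection \<open>Canonical functions\<close>

lemma convex_on_gderiv_above_tangent:
  fixes V :: "'a::real_inner \<Rightarrow> real"
  assumes cv: "convex_on E V" and "\<xi> \<in> E" and "z \<in> E" and g: "GDERIV V \<xi> :> g"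
  shows "V \<xi> + g \<bullet> (z - \<xi>) \<le> V z"
proof -
  let ?d = "z - \<xi>"
  let ?slope = "\<lambda>t. (V (\<xi> + t *\<^sub>R ?d) - V \<xi>) / t"
  have "((\<lambda>t. \<xi> + t *\<^sub>R ?d) has_derivative (\<lambda>t. t *\<^sub>R ?d)) (at 0)"
    by (rule derivative_eq_intros | simp)+
  from has_derivative_compose[OF this, of V "\<lambda>h. h \<bullet> g"] g
  have "((\<lambda>t. V (\<xi> + t *\<^sub>R ?d)) has_field_derivative (?d \<bullet> g)) (at 0)"
    by (simp add: gderiv_def has_field_derivative_def mult.commute[of _ "?d \<bullet> g"])
  then have "(?slope \<longlongrightarrow> ?d \<bullet> g) (at_right 0)"
    by (simp add: has_field_derivative_iff filterlim_at_split)
  moreover have "\<forall>\<^sub>F t in at_right 0. ?slope t \<le> V z - V \<xi>"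
    unfolding eventually_at_right_field
  proof (intro exI[of _ 1] conjI allI impI)
    fix t :: real assume "0 < t" "t < 1"
    have "\<xi> + t *\<^sub>R ?d = (1 - t) *\<^sub>R \<xi> + t *\<^sub>R z" by (simp add: algebra_simps)
    then have "V (\<xi> + t *\<^sub>R ?d) \<le> (1 - t) * V \<xi> + t * V z"
      using convex_onD[OF cv, of t \<xi> z] \<open>0 < t\<close> \<open>t < 1\<close> assms(2,3) by simp
    then have "V (\<xi> + t *\<^sub>R ?d) - V \<xi> \<le> t * (V z - V \<xi>)"
      by (simp add: algebra_simps)
    then show "?slope t \<le> V z - V \<xi>"
      using \<open>0 < t\<close> by (simp add: divide_le_eq mult.commute)
  qed simp
  ultimately have "?d \<bullet> g \<le> V z - V \<xi>"
    by (intro tendsto_le[OF _ tendsto_const]) simp_all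
  then show ?thesis by (simp add: inner_commute)
qed

lemma canonical_gderiv:
  assumes "canonical V gV E Es" and "\<xi> \<in> E"
  shows "GDERIV V \<xi> :> gV \<xi>"
  using assms by (simp add: canonical_def)

lemma canonical_inv_gradient:
  assumes "canonical V gV E Es" and "\<xi> \<in> E"
  shows "inv_into E gV (gV \<xi>) = \<xi>"
  using assms by (simp add: canonical_def bij_betw_def)

lemma legendre_conj_at_gradient:
  assumes "canonical V gV E Es" and "\<xi> \<in> E"
  shows "legendre_conj V gV E (gV \<xi>) = gV \<xi> \<bullet> \<xi> - V \<xi>"
  using canonical_inv_gradient[OF assms] by (simp add: legendre_conj_def)

lemma gderiv_legendre_conj_at_gradient:
  assumes "canonical V gV E Es" and "\<xi> \<in> E"
  shows "GDERIV (legendre_conj V gV E) (gV \<xi>) :> \<xi>"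
proof -
  have "gV \<xi> \<in> Es"
    using assms by (auto simp: canonical_def bij_betw_def)
  then show ?thesis
    using assms canonical_inv_gradient[OF assms] by (auto simp: canonical_def)
qed

lemma fenchel_young_at_gradient:
  assumes "canonical V gV E Es" and "convex_on E V" and "\<xi> \<in> E" and "z \<in> E"
  shows "z \<bullet> gV \<xi> - legendre_conj V gV E (gV \<xi>) \<le> V z"
  using convex_on_gderiv_above_tangent[OF assms(2-4) canonical_gderiv[OF assms(1,3)]]
  by (simp add: legendre_conj_at_gradient[OF assms(1,3)] inner_diff_right inner_commute)

subsection \<open>Quadratic maps\<close>

lemma quad_map_differentiable:
  fixes Q :: "'k::finite \<Rightarrow> real^'n^'n"
  shows "quad_map Q b d differentiable (at x)"
proof -
  have deriv: "((\<lambda>y. quad_map Q b d y $ i) has_derivative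
      (\<lambda>h. (x \<bullet> (Q i *v h) + h \<bullet> (Q i *v x)) / 2 + b i \<bullet> h)) (at x)" for i
    unfolding quad_map_def vec_lambda_beta
    by (rule derivative_eq_intros bounded_linear.has_derivative[OF matrix_vector_mul_bounded_linear]
        | simp)+
  show ?thesis
  proof (rule differentiable_componentwise_within[THEN iffD2], intro ballI)
    fix u :: "real^'k" assume "u \<in> Basis"
    then obtain i where "u = axis i 1" by (auto simp: Basis_vec_def)
    then have "(\<lambda>y. quad_map Q b d y \<bullet> u) = (\<lambda>y. quad_map Q b d y $ i)"
      by (simp add: inner_axis)
    then show "(\<lambda>y. quad_map Q b d y \<bullet> u) differentiable (at x)"
      unfolding differentiable_def using deriv[of i] by metis
  qed
qed

lemma hess_comb_mult_vector: "hess_comb Q s *v x = (\<Sum>i\<in>UNIV. s $ i *\<^sub>R (Q i *v x))"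
proof -
  have "(\<Sum>i\<in>I. M i) *v v = (\<Sum>i\<in>I. M i *v v)" for I and M :: "'i \<Rightarrow> real^'c^'r" and v
    by (induction I rule: infinite_finite_induct) (auto simp: matrix_vector_mult_add_rdistrib)
  then show ?thesis
    by (simp add: hess_comb_def scaleR_matrix_vector_assoc)
qed

lemma hess_comb_symmetric:
  assumes "\<forall>i. transpose (Q i) = Q i"
  shows "transpose (hess_comb Q s) = hess_comb Q s"
proof -
  have transpose_sum: "transpose (\<Sum>i\<in>I. M i) = (\<Sum>i\<in>I. transpose (M i))"
    for I and M :: "'i \<Rightarrow> real^'c^'r"
    by (induction I rule: infinite_finite_induct) (simp_all add: transpose_def vec_eq_iff)
  show ?thesis
    unfolding hess_comb_def transpose_sum using assms by (simp add: transpose_scalar)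
qed

lemma quad_map_inner_eq_quadratic_fun:
  "quad_map Q b d y \<bullet> s =
    quadratic_fun (hess_comb Q s) (\<Sum>i\<in>UNIV. s $ i *\<^sub>R b i) (\<Sum>i\<in>UNIV. s $ i * d i) y"
proof -
  have "quad_map Q b d y \<bullet> s = (\<Sum>i\<in>UNIV. s $ i * ((1/2) * (y \<bullet> (Q i *v y)) + b i \<bullet> y + d i))"
    by (subst inner_vec_def) (simp add: quad_map_def mult.commute)
  then show ?thesis
    by (simp add: quadratic_fun_def hess_comb_mult_vector inner_sum_right inner_sum_left
        sum.distrib sum_distrib_left algebra_simps)
qed

subsection \<open>The augmented Lagrangian and its canonical dual\<close>

locale augmented_lagrangian_duality =
  fixes \<nu> \<mu> :: real
    and A :: "real^'n^'n" and c :: "real^'n"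
    and Qf :: "'kf::finite \<Rightarrow> real^'n^'n" and bf :: "'kf \<Rightarrow> real^'n" and df :: "'kf \<Rightarrow> real"
    and Qh :: "'l::finite \<Rightarrow> real^'n^'n" and bh :: "'l \<Rightarrow> real^'n" and dh :: "'l \<Rightarrow> real"
    and Vf :: "real^'kf \<Rightarrow> real" and gVf :: "real^'kf \<Rightarrow> real^'kf" and Ef Efs :: "(real^'kf) set"
    and Vh :: "real^'l \<Rightarrow> real" and gVh :: "real^'l \<Rightarrow> real^'l" and Eh Ehs :: "(real^'l) set"
    and f h L :: "real^'n \<Rightarrow> real"
    and Xi :: "real^'n \<Rightarrow> real \<Rightarrow> real^'kf \<Rightarrow> real^'l \<Rightarrow> real"
    and G :: "real \<Rightarrow> real^'kf \<Rightarrow> real^'l \<Rightarrow> real^'n^'n"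
    and Pd :: "real \<Rightarrow> real^'kf \<Rightarrow> real^'l \<Rightarrow> real"
    and xbar :: "real^'n"
  assumes nu_pos: "\<nu> > 0"
    and A_sym: "transpose A = A"
    and Qf_sym: "\<forall>i. transpose (Qf i) = Qf i"
    and Qh_sym: "\<forall>j. transpose (Qh j) = Qh j"
    and Vf_can: "canonical Vf gVf Ef Efs"
    and Vh_can: "canonical Vh gVh Eh Ehs"
    and Lf_img: "range (quad_map Qf bf df) \<subseteq> Ef"
    and Lh_img: "range (quad_map Qh bh dh) \<subseteq> Eh"
    and f_def: "\<forall>x. f x = Vf (quad_map Qf bf df x) + (1/2) * (x \<bullet> (A *v x)) - c \<bullet> x"
    and h_def: "\<forall>x. h x = Vh (quad_map Qh bh dh x)"
    and L_def: "\<forall>x. L x = f x + \<mu> * h x + (1 / (2 * \<nu>)) * (h x)\<^sup>2"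
    and Xi_def: "\<forall>x \<tau> sf sh. Xi x \<tau> sf sh =
        quad_map Qf bf df x \<bullet> sf - legendre_conj Vf gVf Ef sf
        + (\<mu> + \<tau>) * (quad_map Qh bh dh x \<bullet> sh - legendre_conj Vh gVh Eh sh)
        - (\<nu> / 2) * \<tau>\<^sup>2 + (1/2) * (x \<bullet> (A *v x)) - c \<bullet> x"
    and G_def: "\<forall>\<tau> sf sh. G \<tau> sf sh = A + hess_comb Qf sf + (\<mu> + \<tau>) *\<^sub>R hess_comb Qh sh"
    and Pd_def: "\<forall>\<tau> sf sh. Pd \<tau> sf sh =
        Xi (THE x. GDERIV (\<lambda>y. Xi y \<tau> sf sh) x :> 0) \<tau> sf sh"
    and stat: "(L has_derivative (\<lambda>_. 0)) (at xbar)"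
begin

abbreviation "\<Lambda>\<^sub>f \<equiv> quad_map Qf bf df"
abbreviation "\<Lambda>\<^sub>h \<equiv> quad_map Qh bh dh"
abbreviation "tau_bar \<equiv> h xbar / \<nu>"
abbreviation "sigma_f_bar \<equiv> gVf (\<Lambda>\<^sub>f xbar)"
abbreviation "sigma_h_bar \<equiv> gVh (\<Lambda>\<^sub>h xbar)"

definition Xi_lin :: "real \<Rightarrow> real^'kf \<Rightarrow> real^'l \<Rightarrow> real^'n" where
  "Xi_lin \<tau> sf sh = (\<Sum>i\<in>UNIV. sf $ i *\<^sub>R bf i) + (\<mu> + \<tau>) *\<^sub>R (\<Sum>j\<in>UNIV. sh $ j *\<^sub>R bh j) - c"

definition Xi_const :: "real \<Rightarrow> real^'kf \<Rightarrow> real^'l \<Rightarrow> real" where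
  "Xi_const \<tau> sf sh =
    (\<Sum>i\<in>UNIV. sf $ i * df i) - legendre_conj Vf gVf Ef sf
    + (\<mu> + \<tau>) * ((\<Sum>j\<in>UNIV. sh $ j * dh j) - legendre_conj Vh gVh Eh sh) - (\<nu> / 2) * \<tau>\<^sup>2"

lemma G_symmetric: "transpose (G \<tau> sf sh) = G \<tau> sf sh"
  using A_sym hess_comb_symmetric[OF Qf_sym] hess_comb_symmetric[OF Qh_sym]
  by (simp add: G_def transpose_def vec_eq_iff transpose_scalar)

lemma Xi_eq_quadratic_fun:
  "(\<lambda>y. Xi y \<tau> sf sh) = quadratic_fun (G \<tau> sf sh) (Xi_lin \<tau> sf sh) (Xi_const \<tau> sf sh)"
proof
  fix y
  have "y \<bullet> (G \<tau> sf sh *v y) = y \<bullet> (A *v y) + y \<bullet> (hess_comb Qf sf *v y)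
      + (\<mu> + \<tau>) * (y \<bullet> (hess_comb Qh sh *v y))"
    by (simp add: G_def matrix_vector_mult_add_rdistrib scaleR_matrix_vector_assoc[symmetric]
        inner_add_right)
  then show "Xi y \<tau> sf sh = quadratic_fun (G \<tau> sf sh) (Xi_lin \<tau> sf sh) (Xi_const \<tau> sf sh) y"
    by (simp add: Xi_def quad_map_inner_eq_quadratic_fun quadratic_fun_def Xi_lin_def Xi_const_def
        algebra_simps)
qed

lemmas Xi_eq_quadratic_fun_at = fun_cong[OF Xi_eq_quadratic_fun]

lemma Pd_eq_stationary_value:
  "Pd \<tau> sf sh = stationary_value (quadratic_fun (G \<tau> sf sh) (Xi_lin \<tau> sf sh) (Xi_const \<tau> sf sh))"
  by (simp add: stationary_value_def Pd_def flip: Xi_eq_quadratic_fun)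

lemma Lambda_mem: "\<Lambda>\<^sub>f x \<in> Ef" "\<Lambda>\<^sub>h x \<in> Eh"
  using Lf_img Lh_img by auto

lemma xbar_stationary:
  "G tau_bar sigma_f_bar sigma_h_bar *v xbar + Xi_lin tau_bar sigma_f_bar sigma_h_bar = 0"
proof -
  obtain Df Dh where Df: "(\<Lambda>\<^sub>f has_derivative Df) (at xbar)"
    and Dh: "(\<Lambda>\<^sub>h has_derivative Dh) (at xbar)"
    using quad_map_differentiable by (metis differentiable_def)
  have Vf_comp: "((\<lambda>y. Vf (\<Lambda>\<^sub>f y)) has_derivative (\<lambda>k. Df k \<bullet> sigma_f_bar)) (at xbar)"
    using has_derivative_compose[OF Df canonical_gderiv[OF Vf_can Lambda_mem(1), unfolded gderiv_def]] .
  have Vh_comp: "((\<lambda>y. Vh (\<Lambda>\<^sub>h y)) has_derivative (\<lambda>k. Dh k \<bullet> sigma_h_bar)) (at xbar)"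
    using has_derivative_compose[OF Dh canonical_gderiv[OF Vh_can Lambda_mem(2), unfolded gderiv_def]] .
  have quad_A: "((\<lambda>y. quadratic_fun A (- c) 0 y) has_derivative (\<lambda>k. k \<bullet> (A *v xbar - c))) (at xbar)"
    using gderiv_quadratic_fun[OF A_sym, of "- c" 0 xbar] by (simp add: gderiv_def)
  have L_fun: "L = (\<lambda>y. Vf (\<Lambda>\<^sub>f y) + quadratic_fun A (- c) 0 y + \<mu> * Vh (\<Lambda>\<^sub>h y)
      + (1 / (2 * \<nu>)) * (Vh (\<Lambda>\<^sub>h y) * Vh (\<Lambda>\<^sub>h y)))"
    using L_def f_def h_def by (auto simp: quadratic_fun_def power2_eq_square)
  have Xi_fun: "(\<lambda>y. Xi y tau_bar sigma_f_bar sigma_h_bar) = (\<lambda>y. \<Lambda>\<^sub>f y \<bullet> sigma_f_bar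
      - legendre_conj Vf gVf Ef sigma_f_bar
      + (\<mu> + tau_bar) * (\<Lambda>\<^sub>h y \<bullet> sigma_h_bar - legendre_conj Vh gVh Eh sigma_h_bar)
      - (\<nu> / 2) * tau_bar\<^sup>2 + quadratic_fun A (- c) 0 y)"
    by (auto simp: Xi_def quadratic_fun_def)
  define D where "D k = Df k \<bullet> sigma_f_bar + (\<mu> + tau_bar) * (Dh k \<bullet> sigma_h_bar)
      + k \<bullet> (A *v xbar - c)" for k
  have "(L has_derivative D) (at xbar)"
    unfolding L_fun
    by (rule has_derivative_eq_rhs, (rule derivative_eq_intros Vf_comp Vh_comp quad_A refl)+)
      (use nu_pos in \<open>auto simp: D_def h_def field_simps\<close>)
  then have "D = (\<lambda>_. 0)"
    using stat has_derivative_unique by blast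
  moreover have "((\<lambda>y. Xi y tau_bar sigma_f_bar sigma_h_bar) has_derivative D) (at xbar)"
    unfolding Xi_fun
    by (rule has_derivative_eq_rhs, (rule derivative_eq_intros Df Dh quad_A refl)+)
      (auto simp: D_def)
  ultimately have "GDERIV (\<lambda>y. Xi y tau_bar sigma_f_bar sigma_h_bar) xbar :> 0"
    by (simp add: gderiv_def)
  then show ?thesis
    by (simp add: Xi_eq_quadratic_fun quadratic_fun_stationary_iff[OF G_symmetric])
qed

lemma L_xbar_eq_Xi: "L xbar = Xi xbar tau_bar sigma_f_bar sigma_h_bar"
proof -
  have conj_f: "legendre_conj Vf gVf Ef sigma_f_bar = sigma_f_bar \<bullet> \<Lambda>\<^sub>f xbar - Vf (\<Lambda>\<^sub>f xbar)"
    and conj_h: "legendre_conj Vh gVh Eh sigma_h_bar = sigma_h_bar \<bullet> \<Lambda>\<^sub>h xbar - Vh (\<Lambda>\<^sub>h xbar)"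
    using legendre_conj_at_gradient Vf_can Vh_can Lambda_mem by blast+
  show ?thesis
    using nu_pos
    by (simp add: L_def f_def h_def Xi_def conj_f conj_h inner_commute field_simps power2_eq_square)
qed

lemma L_xbar_eq_Pd:
  assumes "invertible (G tau_bar sigma_f_bar sigma_h_bar)"
  shows "L xbar = Pd tau_bar sigma_f_bar sigma_h_bar"
  using stationary_value_quadratic_fun[OF G_symmetric assms xbar_stationary]
  by (simp add: Pd_eq_stationary_value L_xbar_eq_Xi Xi_eq_quadratic_fun_at)

lemma Xi_xbar_has_derivative_zero:
  "((\<lambda>(\<tau>, sf, sh). Xi xbar \<tau> sf sh) has_derivative (\<lambda>_. 0))
    (at (tau_bar, sigma_f_bar, sigma_h_bar))"
proof -
  let ?p = "(tau_bar, sigma_f_bar, sigma_h_bar)"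
  let ?Cf = "legendre_conj Vf gVf Ef" and ?Ch = "legendre_conj Vh gVh Eh"
  have "((\<lambda>p. fst (snd p)) has_derivative (\<lambda>q. fst (snd q))) (at ?p)"
    by (intro derivative_intros)
  from has_derivative_compose[OF this] gderiv_legendre_conj_at_gradient[OF Vf_can Lambda_mem(1)[of xbar]]
  have Cf: "((\<lambda>p. ?Cf (fst (snd p))) has_derivative (\<lambda>q. fst (snd q) \<bullet> \<Lambda>\<^sub>f xbar)) (at ?p)"
    by (simp add: gderiv_def)
  have "((\<lambda>p. snd (snd p)) has_derivative (\<lambda>q. snd (snd q))) (at ?p)"
    by (intro derivative_intros)
  from has_derivative_compose[OF this] gderiv_legendre_conj_at_gradient[OF Vh_can Lambda_mem(2)[of xbar]]
  have Ch: "((\<lambda>p. ?Ch (snd (snd p))) has_derivative (\<lambda>q. snd (snd q) \<bullet> \<Lambda>\<^sub>h xbar)) (at ?p)"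
    by (simp add: gderiv_def)
  have Xi_fun: "(\<lambda>(\<tau>, sf, sh). Xi xbar \<tau> sf sh) = (\<lambda>p. \<Lambda>\<^sub>f xbar \<bullet> fst (snd p) - ?Cf (fst (snd p))
      + (\<mu> + fst p) * (\<Lambda>\<^sub>h xbar \<bullet> snd (snd p) - ?Ch (snd (snd p)))
      - (\<nu> / 2) * (fst p)\<^sup>2 + quadratic_fun A (- c) 0 xbar)"
    by (auto simp: fun_eq_iff Xi_def quadratic_fun_def)
  have conj_h: "?Ch sigma_h_bar = sigma_h_bar \<bullet> \<Lambda>\<^sub>h xbar - h xbar"
    using legendre_conj_at_gradient[OF Vh_can Lambda_mem(2)] h_def by simp
  show ?thesis
    unfolding Xi_fun
    by (rule has_derivative_eq_rhs, (rule derivative_eq_intros Cf Ch refl)+)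
      (use nu_pos in \<open>auto simp: conj_h fun_eq_iff inner_commute field_simps\<close>)
qed

lemma Pd_has_derivative_zero:
  assumes "invertible (G tau_bar sigma_f_bar sigma_h_bar)"
  shows "((\<lambda>(\<tau>, sf, sh). Pd \<tau> sf sh) has_derivative (\<lambda>_. 0))
    (at (tau_bar, sigma_f_bar, sigma_h_bar))"
proof -
  let ?p = "(tau_bar, sigma_f_bar, sigma_h_bar)"
  define M where "M p = G (fst p) (fst (snd p)) (snd (snd p))" for p
  define \<beta> where "\<beta> p = Xi_lin (fst p) (fst (snd p)) (snd (snd p))" for p
  define \<gamma> where "\<gamma> p = Xi_const (fst p) (fst (snd p)) (snd (snd p))" for p
  have "((\<lambda>p. stationary_value (quadratic_fun (M p) (\<beta> p) (\<gamma> p))) has_derivative (\<lambda>_. 0)) (at ?p)"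
  proof (rule stationary_value_quadratic_family_has_derivative)
    show "transpose (M p) = M p" for p
      by (simp add: M_def G_symmetric)
    show "isCont M ?p"
      unfolding M_def G_def[rule_format] hess_comb_def by (intro continuous_intros)
    show "invertible (M ?p)"
      using assms by (simp add: M_def)
    show "M ?p *v xbar + \<beta> ?p = 0"
      using xbar_stationary by (simp add: M_def \<beta>_def)
    have grad: "(\<lambda>p. M p *v xbar + \<beta> p) = (\<lambda>p. A *v xbar - c
        + (\<Sum>i\<in>UNIV. fst (snd p) $ i *\<^sub>R (Qf i *v xbar + bf i))
        + (\<mu> + fst p) *\<^sub>R (\<Sum>j\<in>UNIV. snd (snd p) $ j *\<^sub>R (Qh j *v xbar + bh j)))"
      by (auto simp: fun_eq_iff M_def \<beta>_def G_def Xi_lin_def hess_comb_mult_vector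
          scaleR_matrix_vector_assoc[symmetric] sum.distrib algebra_simps)
    show "(\<lambda>p. M p *v xbar + \<beta> p) differentiable (at ?p)"
      unfolding grad differentiable_def
      by (rule exI, (rule derivative_intros bounded_linear.has_derivative[OF bounded_linear_vec_nth])+)
    have "(\<lambda>p. quadratic_fun (M p) (\<beta> p) (\<gamma> p) xbar) = (\<lambda>(\<tau>, sf, sh). Xi xbar \<tau> sf sh)"
      by (auto simp: fun_eq_iff M_def \<beta>_def \<gamma>_def Xi_eq_quadratic_fun_at)
    then show "((\<lambda>p. quadratic_fun (M p) (\<beta> p) (\<gamma> p) xbar) has_derivative (\<lambda>_. 0)) (at ?p)"
      using Xi_xbar_has_derivative_zero by simp
  qed
  moreover have "(\<lambda>p. stationary_value (quadratic_fun (M p) (\<beta> p) (\<gamma> p))) = (\<lambda>(\<tau>, sf, sh). Pd \<tau> sf sh)"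
    by (auto simp: fun_eq_iff M_def \<beta>_def \<gamma>_def Pd_eq_stationary_value)
  ultimately show ?thesis by simp
qed

lemma Xi_le_L:
  assumes "convex_on Ef Vf" and "convex_on Eh Vh" and "\<mu> + tau_bar > 0"
  shows "Xi x tau_bar sigma_f_bar sigma_h_bar \<le> L x"
proof -
  have f_part: "\<Lambda>\<^sub>f x \<bullet> sigma_f_bar - legendre_conj Vf gVf Ef sigma_f_bar \<le> Vf (\<Lambda>\<^sub>f x)"
    by (rule fenchel_young_at_gradient[OF Vf_can assms(1) Lambda_mem(1) Lambda_mem(1)])
  have "\<Lambda>\<^sub>h x \<bullet> sigma_h_bar - legendre_conj Vh gVh Eh sigma_h_bar \<le> h x"
    using fenchel_young_at_gradient[OF Vh_can assms(2) Lambda_mem(2) Lambda_mem(2)] h_def by simp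
  then have h_part: "(\<mu> + tau_bar) * (\<Lambda>\<^sub>h x \<bullet> sigma_h_bar - legendre_conj Vh gVh Eh sigma_h_bar)
      \<le> (\<mu> + tau_bar) * h x"
    using assms(3) by (intro mult_left_mono) auto
  have "0 \<le> (h x - \<nu> * tau_bar)\<^sup>2 / (2 * \<nu>)"
    using nu_pos by simp
  also have "\<dots> = (1 / (2 * \<nu>)) * (h x)\<^sup>2 - (tau_bar * h x - (\<nu> / 2) * tau_bar\<^sup>2)"
    using nu_pos by (simp add: field_simps power2_eq_square)
  finally have "tau_bar * h x - (\<nu> / 2) * tau_bar\<^sup>2 \<le> (1 / (2 * \<nu>)) * (h x)\<^sup>2"
    by simp
  with f_part h_part show ?thesis
    by (simp add: Xi_def L_def f_def algebra_simps)
qed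

lemma L_global_min:
  assumes "convex_on Ef Vf" and "convex_on Eh Vh" and "\<mu> + tau_bar > 0"
    and "pos_def_mat (G tau_bar sigma_f_bar sigma_h_bar)"
  shows "L xbar \<le> L x"
proof -
  have "L xbar = Xi xbar tau_bar sigma_f_bar sigma_h_bar"
    by (rule L_xbar_eq_Xi)
  also have "\<dots> \<le> Xi x tau_bar sigma_f_bar sigma_h_bar"
    using quadratic_fun_minimum[OF G_symmetric assms(4) xbar_stationary]
    by (simp add: Xi_eq_quadratic_fun_at)
  also have "\<dots> \<le> L x"
    using Xi_le_L[OF assms(1-3)] .
  finally show ?thesis .
qed

end

theorem corollary1:
  fixes \<nu> \<mu> :: real
    and A :: "real^'n^'n" and c :: "real^'n"
    and Qf :: "'kf::finite \<Rightarrow> real^'n^'n" and bf :: "'kf \<Rightarrow> real^'n" and df :: "'kf \<Rightarrow> real"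
    and Qh :: "'l::finite \<Rightarrow> real^'n^'n" and bh :: "'l \<Rightarrow> real^'n" and dh :: "'l \<Rightarrow> real"
    and Vf :: "real^'kf \<Rightarrow> real" and gVf :: "real^'kf \<Rightarrow> real^'kf" and Ef Efs :: "(real^'kf) set"
    and Vh :: "real^'l \<Rightarrow> real" and gVh :: "real^'l \<Rightarrow> real^'l" and Eh Ehs :: "(real^'l) set"
    and f h L :: "real^'n \<Rightarrow> real"
    and Xi :: "real^'n \<Rightarrow> real \<Rightarrow> real^'kf \<Rightarrow> real^'l \<Rightarrow> real"
    and G :: "real \<Rightarrow> real^'kf \<Rightarrow> real^'l \<Rightarrow> real^'n^'n"
    and Pd :: "real \<Rightarrow> real^'kf \<Rightarrow> real^'l \<Rightarrow> real"
    and xbar :: "real^'n"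
  assumes nu_pos: "\<nu> > 0"
    and A_sym: "transpose A = A"
    and Qf_sym: "\<forall>i. transpose (Qf i) = Qf i"
    and Qh_sym: "\<forall>j. transpose (Qh j) = Qh j"
    and Vf_can: "canonical Vf gVf Ef Efs"
    and Vh_can: "canonical Vh gVh Eh Ehs"
    and Lf_img: "range (quad_map Qf bf df) \<subseteq> Ef"
    and Lh_img: "range (quad_map Qh bh dh) \<subseteq> Eh"
    and f_def: "\<forall>x. f x = Vf (quad_map Qf bf df x) + (1/2) * (x \<bullet> (A *v x)) - c \<bullet> x"
    and h_def: "\<forall>x. h x = Vh (quad_map Qh bh dh x)"
    and L_def: "\<forall>x. L x = f x + \<mu> * h x + (1 / (2 * \<nu>)) * (h x)\<^sup>2"
    and Xi_def: "\<forall>x \<tau> sf sh. Xi x \<tau> sf sh =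
        quad_map Qf bf df x \<bullet> sf - legendre_conj Vf gVf Ef sf
        + (\<mu> + \<tau>) * (quad_map Qh bh dh x \<bullet> sh - legendre_conj Vh gVh Eh sh)
        - (\<nu> / 2) * \<tau>\<^sup>2 + (1/2) * (x \<bullet> (A *v x)) - c \<bullet> x"
    and G_def: "\<forall>\<tau> sf sh. G \<tau> sf sh = A + hess_comb Qf sf + (\<mu> + \<tau>) *\<^sub>R hess_comb Qh sh"
    and Pd_def: "\<forall>\<tau> sf sh. Pd \<tau> sf sh =
        Xi (THE x. GDERIV (\<lambda>y. Xi y \<tau> sf sh) x :> 0) \<tau> sf sh"
    and stat: "(L has_derivative (\<lambda>_. 0)) (at xbar)"
  shows "(invertible (G (h xbar / \<nu>) (gVf (quad_map Qf bf df xbar)) (gVh (quad_map Qh bh dh xbar))) \<longrightarrow>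
            ((\<lambda>(\<tau>, sf, sh). Pd \<tau> sf sh) has_derivative (\<lambda>_. 0))
               (at (h xbar / \<nu>, gVf (quad_map Qf bf df xbar), gVh (quad_map Qh bh dh xbar)))
            \<and> L xbar = Pd (h xbar / \<nu>) (gVf (quad_map Qf bf df xbar)) (gVh (quad_map Qh bh dh xbar)))
       \<and> (convex_on Ef Vf \<and> convex_on Eh Vh \<and> \<mu> + h xbar / \<nu> > 0 \<and>
            pos_def_mat (G (h xbar / \<nu>) (gVf (quad_map Qf bf df xbar)) (gVh (quad_map Qh bh dh xbar)))
          \<longrightarrow> (\<forall>x. L xbar \<le> L x))"
proof -
  interpret augmented_lagrangian_duality \<nu> \<mu> A c Qf bf df Qh bh dh Vf gVf Ef Efs Vh gVh Eh Ehs
      f h L Xi G Pd xbar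
    by (rule augmented_lagrangian_duality.intro) (fact assms)+
  show ?thesis
    using Pd_has_derivative_zero L_xbar_eq_Pd L_global_min by blast
qed

end
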